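(* Let $x_1,\dots,x_n\in\mathbb{R}^p$, $\epsilon>0$, $k(x,x')=\exp(-\|x-x'\|^2/(4\epsilon^2))$, $\bar K_{ij}=k(x_i,x_j)$, $\bar A_{ij}=k(x_i,x_j)/(\bar K_{i\cdot}\bar K_{\cdot j})$, $\bar Z_{ij}=\bar A_{ij}/\bar A_{i\cdot}$ for $1\le i,j\le n$, and $\bar\Lambda=\mathrm{diag}(\bar Z_{\cdot1},\dots,\bar Z_{\cdot n})$. Let $\gamma_n=\sup_{1\le i,j\le n}\bar A_{i\cdot}/\bar A_{j\cdot}-1$. Then $\|\bar Z-\bar\Lambda^{-1}\bar Z^\top\|_2\le\sqrt2\,\gamma_n$.
   Context: $B_{i\cdot}=\sum_jB_{ij}$, $B_{\cdot j}=\sum_iB_{ij}$; $\|\cdot\|_2$ is the spectral norm. *)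

theory Defs
  imports "HOL-Analysis.Analysis"
begin

definition gkernel :: "real \<Rightarrow> 'a::real_normed_vector \<Rightarrow> 'a \<Rightarrow> real" where
  "gkernel eps a b = exp (- (norm (a - b))\<^sup>2 / (4 * eps\<^sup>2))"

definition row_sum :: "real^'n^'m \<Rightarrow> 'm \<Rightarrow> real" where
  "row_sum M i = (\<Sum>j\<in>UNIV. M $ i $ j)"

definition col_sum :: "real^'n^'m \<Rightarrow> 'n \<Rightarrow> real" where
  "col_sum M j = (\<Sum>i\<in>UNIV. M $ i $ j)"

definition Kbar :: "real \<Rightarrow> ('n::finite \<Rightarrow> real^'p) \<Rightarrow> real^'n^'n" where
  "Kbar eps x = (\<chi> i j. gkernel eps (x i) (x j))"

definition Abar :: "real \<Rightarrow> ('n::finite \<Rightarrow> real^'p) \<Rightarrow> real^'n^'n" where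
  "Abar eps x = (\<chi> i j. gkernel eps (x i) (x j)
                   / (row_sum (Kbar eps x) i * col_sum (Kbar eps x) j))"

definition Zbar :: "real \<Rightarrow> ('n::finite \<Rightarrow> real^'p) \<Rightarrow> real^'n^'n" where
  "Zbar eps x = (\<chi> i j. Abar eps x $ i $ j / row_sum (Abar eps x) i)"

definition Lambdabar :: "real \<Rightarrow> ('n::finite \<Rightarrow> real^'p) \<Rightarrow> real^'n^'n" where
  "Lambdabar eps x = (\<chi> i j. if i = j then col_sum (Zbar eps x) i else 0)"

definition gamma_n :: "real \<Rightarrow> ('n::finite \<Rightarrow> real^'p) \<Rightarrow> real" where
  "gamma_n eps x = Max {row_sum (Abar eps x) i / row_sum (Abar eps x) j | i j. True} - 1"

text \<open>Spectral norm = operator norm w.r.t. the Euclidean norm.\<close>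
definition spectral_norm :: "real^'n^'m \<Rightarrow> real" where
  "spectral_norm M = onorm (\<lambda>v. M *v v)"

end

theory Submission
  imports Defs
begin

text \<open>
Write A for the symmetric matrix Abar, a_i for its row sums and l_i for the column sums of its
row normalisation Z. Then Lambda^-1 Z^T is the row normalisation of Z^T, and the entry (i, j) of
M = Z - Lambda^-1 Z^T is A_ij (a_j l_i - a_i) / (a_i a_j l_i). Since
a_j l_i - a_i = sum_k A_ik (a_j - a_k) / a_k and every |a_j - a_k| is at most gamma a_j, this gives
|M_ij| \<le> gamma A_ij / a_i; splitting a_j l_i - a_i = (a_j - a_i) l_i + a_i (l_i - 1) also gives
|M_ij| \<le> 2 gamma A_ij / a_j. So the absolute row sums of M are at most gamma and its absolute
column sums at most 2 gamma, and Schur's test bounds the spectral norm of M by sqrt (2 gamma^2).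
\<close>

lemma sum_weighted_square_le:
  fixes w y :: "'a \<Rightarrow> real"
  assumes "\<And>j. j \<in> S \<Longrightarrow> 0 \<le> w j"
  shows "(\<Sum>j\<in>S. w j * y j)\<^sup>2 \<le> (\<Sum>j\<in>S. w j) * (\<Sum>j\<in>S. w j * (y j)\<^sup>2)"
proof -
  have "(\<Sum>j\<in>S. sqrt (w j) * (sqrt (w j) * y j))\<^sup>2
      \<le> (\<Sum>j\<in>S. (sqrt (w j))\<^sup>2) * (\<Sum>j\<in>S. (sqrt (w j) * y j)\<^sup>2)"
    by (rule Cauchy_Schwarz_ineq_sum)
  moreover have "(sqrt (w j))\<^sup>2 = w j" if "j \<in> S" for j
    using assms that by simp
  ultimately show ?thesis
    by (simp add: power_mult_distrib mult.assoc[symmetric] flip: power2_eq_square cong: sum.cong)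
qed

lemma norm_vec_power2: "(norm (v :: real^'n))\<^sup>2 = (\<Sum>j\<in>UNIV. (v $ j)\<^sup>2)"
  by (simp add: norm_vec_def L2_set_def sum_nonneg)

lemma norm_matrix_vector_mult_power2_le:
  fixes M :: "real^'n^'m" and v :: "real^'n"
  assumes row: "\<And>i. (\<Sum>j\<in>UNIV. \<bar>M $ i $ j\<bar>) \<le> R"
    and col: "\<And>j. (\<Sum>i\<in>UNIV. \<bar>M $ i $ j\<bar>) \<le> C"
  shows "(norm (M *v v))\<^sup>2 \<le> R * C * (norm v)\<^sup>2"
proof -
  have R_nonneg: "0 \<le> R"
    by (rule order_trans[OF sum_nonneg row]) simp
  have row_term: "((M *v v) $ i)\<^sup>2 \<le> R * (\<Sum>j\<in>UNIV. \<bar>M $ i $ j\<bar> * (v $ j)\<^sup>2)" for i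
  proof -
    have "\<bar>(M *v v) $ i\<bar> \<le> (\<Sum>j\<in>UNIV. \<bar>M $ i $ j\<bar> * \<bar>v $ j\<bar>)"
      unfolding matrix_vector_mult_def vec_lambda_beta
      by (rule order_trans[OF sum_abs]) (simp add: abs_mult)
    then have "\<bar>(M *v v) $ i\<bar>\<^sup>2 \<le> (\<Sum>j\<in>UNIV. \<bar>M $ i $ j\<bar> * \<bar>v $ j\<bar>)\<^sup>2"
      by (rule power_mono) simp
    then have "((M *v v) $ i)\<^sup>2 \<le> (\<Sum>j\<in>UNIV. \<bar>M $ i $ j\<bar> * \<bar>v $ j\<bar>)\<^sup>2"
      by simp
    also have "\<dots> \<le> (\<Sum>j\<in>UNIV. \<bar>M $ i $ j\<bar>) * (\<Sum>j\<in>UNIV. \<bar>M $ i $ j\<bar> * \<bar>v $ j\<bar>\<^sup>2)"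
      by (rule sum_weighted_square_le) simp
    also have "\<dots> \<le> R * (\<Sum>j\<in>UNIV. \<bar>M $ i $ j\<bar> * (v $ j)\<^sup>2)"
      by (simp add: row mult_right_mono sum_nonneg)
    finally show ?thesis .
  qed
  have "(norm (M *v v))\<^sup>2 \<le> (\<Sum>i\<in>UNIV. R * (\<Sum>j\<in>UNIV. \<bar>M $ i $ j\<bar> * (v $ j)\<^sup>2))"
    unfolding norm_vec_power2 by (intro sum_mono row_term)
  also have "\<dots> = R * (\<Sum>i\<in>UNIV. \<Sum>j\<in>UNIV. \<bar>M $ i $ j\<bar> * (v $ j)\<^sup>2)"
    by (simp add: sum_distrib_left)
  also have "\<dots> = R * (\<Sum>j\<in>UNIV. \<Sum>i\<in>UNIV. \<bar>M $ i $ j\<bar> * (v $ j)\<^sup>2)"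
    by (subst sum.swap) (rule refl)
  also have "\<dots> = R * (\<Sum>j\<in>UNIV. (\<Sum>i\<in>UNIV. \<bar>M $ i $ j\<bar>) * (v $ j)\<^sup>2)"
    by (simp add: sum_distrib_right)
  also have "\<dots> \<le> R * (\<Sum>j\<in>UNIV. C * (v $ j)\<^sup>2)"
    using R_nonneg col by (intro mult_left_mono sum_mono mult_right_mono) auto
  finally show ?thesis
    by (simp add: norm_vec_power2 sum_distrib_left mult.assoc)
qed

lemma onorm_matrix_le_schur:
  fixes M :: "real^'n^'m"
  assumes row: "\<And>i. (\<Sum>j\<in>UNIV. \<bar>M $ i $ j\<bar>) \<le> R"
    and col: "\<And>j. (\<Sum>i\<in>UNIV. \<bar>M $ i $ j\<bar>) \<le> C"
  shows "onorm ((*v) M) \<le> sqrt (R * C)"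
proof (rule onorm_bound)
  have "0 \<le> R" "0 \<le> C"
    by (rule order_trans[OF sum_nonneg row] order_trans[OF sum_nonneg col], simp)+
  then show "0 \<le> sqrt (R * C)"
    by simp
  show "norm (M *v v) \<le> sqrt (R * C) * norm v" for v
  proof -
    have "norm (M *v v) \<le> sqrt (R * C * (norm v)\<^sup>2)"
      using norm_matrix_vector_mult_power2_le[OF row col] by (rule real_le_rsqrt)
    then show ?thesis
      by (simp add: real_sqrt_mult)
  qed
qed

definition diag_mat :: "('n \<Rightarrow> 'a::zero) \<Rightarrow> 'a^'n^'n" where
  "diag_mat d = (\<chi> i j. if i = j then d i else 0)"

lemma diag_mat_nth [simp]: "diag_mat d $ i $ j = (if i = j then d i else 0)"
  by (simp add: diag_mat_def)

lemma diag_mat_mult_nth [simp]: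
  fixes M :: "'a::semiring_1^'m^'n"
  shows "(diag_mat d ** M) $ i $ j = d i * M $ i $ j"
  by (simp add: matrix_matrix_mult_def if_distrib[of "\<lambda>t. t * _"] cong: if_cong)

lemma matrix_inv_eqI:
  fixes A :: "'a::semiring_1^'n^'m"
  assumes "A ** B = mat 1" and "B ** A = mat 1"
  shows "matrix_inv A = B"
proof -
  have inv: "A ** matrix_inv A = mat 1 \<and> matrix_inv A ** A = mat 1"
    unfolding matrix_inv_def by (rule someI[of _ B]) (use assms in simp)
  have "matrix_inv A = matrix_inv A ** (A ** B)"
    using assms(1) by simp
  also have "\<dots> = B"
    using inv by (simp add: matrix_mul_assoc)
  finally show ?thesis .
qed

lemma matrix_inv_diag_mat:
  fixes d :: "'n::finite \<Rightarrow> 'a::field"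
  assumes "\<And>i. d i \<noteq> 0"
  shows "matrix_inv (diag_mat d) = diag_mat (\<lambda>i. inverse (d i))"
  by (rule matrix_inv_eqI) (simp_all add: assms vec_eq_iff mat_def)

lemma abs_diff_le_of_ratio_le:
  fixes x y g :: real
  assumes "0 < x" "0 < y" "x / y \<le> 1 + g" "y / x \<le> 1 + g"
  shows "\<bar>x - y\<bar> \<le> g * y"
proof -
  have "x \<le> (1 + g) * y" "y \<le> (1 + g) * x"
    using assms by (simp_all add: divide_le_eq)
  moreover have "0 \<le> g"
  proof (rule ccontr)
    assume "\<not> 0 \<le> g"
    then have "(1 + g) * y < y" "(1 + g) * x < x"
      using assms(1,2) by (simp_all add: algebra_simps mult_neg_pos)
    with \<open>x \<le> (1 + g) * y\<close> \<open>y \<le> (1 + g) * x\<close> show False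
      by linarith
  qed
  moreover have "g * x \<le> g * y" if "x \<le> y"
    using that \<open>0 \<le> g\<close> by (rule mult_left_mono)
  ultimately show ?thesis
    using assms(2) mult_nonneg_nonneg[of g y] by (cases "x \<le> y") (auto simp: abs_le_iff algebra_simps)
qed

definition row_normalize :: "real^'n^'m \<Rightarrow> real^'n^'m" where
  "row_normalize A = (\<chi> i j. A $ i $ j / row_sum A i)"

lemma row_normalize_nth [simp]: "row_normalize A $ i $ j = A $ i $ j / row_sum A i"
  by (simp add: row_normalize_def)

lemma transpose_nth [simp]: "transpose M $ i $ j = M $ j $ i"
  by (simp add: transpose_def)

lemma row_sum_transpose [simp]: "row_sum (transpose M) = col_sum M"
  by (simp add: fun_eq_iff row_sum_def col_sum_def)

lemma matrix_inv_col_sum_mult_transpose: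
  fixes Z :: "real^'n^'n"
  assumes "\<And>i. col_sum Z i \<noteq> 0"
  shows "matrix_inv (diag_mat (col_sum Z)) ** transpose Z = row_normalize (transpose Z)"
  by (simp add: assms matrix_inv_diag_mat vec_eq_iff divide_inverse mult.commute)

context
  fixes A :: "real^'n^'n"
  assumes nonneg: "\<And>i j. 0 \<le> A $ i $ j"
    and symmetric: "\<And>i j. A $ i $ j = A $ j $ i"
    and row_sum_pos: "\<And>i. 0 < row_sum A i"
begin

lemma col_sum_row_normalize: "col_sum (row_normalize A) i = (\<Sum>k\<in>UNIV. A $ i $ k / row_sum A k)"
  by (simp add: col_sum_def symmetric[of _ i])

lemma col_sum_row_normalize_pos: "0 < col_sum (row_normalize A) i"
proof -
  have "\<exists>k. 0 < A $ i $ k"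
  proof (rule ccontr)
    assume "\<nexists>k. 0 < A $ i $ k"
    with nonneg have "row_sum A i = 0"
      unfolding row_sum_def by (intro sum.neutral ballI) (meson antisym not_less)
    with row_sum_pos[of i] show False
      by simp
  qed
  then obtain k where "0 < A $ i $ k"
    by blast
  then show ?thesis
    unfolding col_sum_row_normalize
    using row_sum_pos nonneg by (intro sum_pos2[where i=k]) (auto intro: divide_nonneg_pos)
qed

lemma row_sum_mult_col_sum_row_normalize_diff:
  "row_sum A j * col_sum (row_normalize A) i - row_sum A i
     = (\<Sum>k\<in>UNIV. A $ i $ k / row_sum A k * (row_sum A j - row_sum A k))"
proof -
  have "A $ i $ k / row_sum A k * (row_sum A j - row_sum A k)
          = row_sum A j * (A $ i $ k / row_sum A k) - A $ i $ k" for k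
    using row_sum_pos[of k] by (simp add: field_simps)
  then show ?thesis
    by (simp add: col_sum_row_normalize sum_distrib_left sum_subtractf row_sum_def[of A i])
qed

lemma row_normalize_minus_transpose_nth:
  "(row_normalize A - row_normalize (transpose (row_normalize A))) $ i $ j
     = A $ i $ j / (row_sum A i * row_sum A j * col_sum (row_normalize A) i)
       * (row_sum A j * col_sum (row_normalize A) i - row_sum A i)"
  using row_sum_pos[of i] row_sum_pos[of j] col_sum_row_normalize_pos[of i]
  by (simp add: symmetric[of j i] field_simps)

context
  fixes g :: real
  assumes row_sum_ratio_le: "\<And>k l. row_sum A k / row_sum A l \<le> 1 + g"
begin

lemma row_sum_ratio_bound_nonneg: "0 \<le> g"
  using row_sum_ratio_le[of i i] row_sum_pos[of i] by simp

lemma abs_row_sum_diff_le: "\<bar>row_sum A k - row_sum A l\<bar> \<le> g * row_sum A l"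
  using row_sum_pos row_sum_pos row_sum_ratio_le row_sum_ratio_le by (rule abs_diff_le_of_ratio_le)

lemma abs_row_sum_mult_col_sum_row_normalize_diff_le:
  "\<bar>row_sum A j * col_sum (row_normalize A) i - row_sum A i\<bar>
     \<le> g * (row_sum A j * col_sum (row_normalize A) i)"
proof -
  have "\<bar>row_sum A j * col_sum (row_normalize A) i - row_sum A i\<bar>
          \<le> (\<Sum>k\<in>UNIV. \<bar>A $ i $ k / row_sum A k * (row_sum A j - row_sum A k)\<bar>)"
    unfolding row_sum_mult_col_sum_row_normalize_diff by (rule sum_abs)
  also have "\<dots> \<le> (\<Sum>k\<in>UNIV. A $ i $ k / row_sum A k * (g * row_sum A j))"
  proof (rule sum_mono)
    fix k
    have w: "0 \<le> A $ i $ k / row_sum A k"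
      using nonneg row_sum_pos by (simp add: less_imp_le)
    have "\<bar>A $ i $ k / row_sum A k * (row_sum A j - row_sum A k)\<bar>
                 = A $ i $ k / row_sum A k * \<bar>row_sum A j - row_sum A k\<bar>"
      by (simp only: abs_mult abs_of_nonneg[OF w])
    also have "\<dots> \<le> A $ i $ k / row_sum A k * (g * row_sum A j)"
      using abs_row_sum_diff_le[of k j] w by (subst abs_minus_commute) (rule mult_left_mono)
    finally show "\<bar>A $ i $ k / row_sum A k * (row_sum A j - row_sum A k)\<bar>
                 \<le> A $ i $ k / row_sum A k * (g * row_sum A j)" .
  qed
  also have "\<dots> = g * (row_sum A j * col_sum (row_normalize A) i)"
    by (simp add: col_sum_row_normalize sum_distrib_left sum_distrib_right mult_ac)
  finally show ?thesis .
qed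

lemma abs_col_sum_row_normalize_diff_le:
  "\<bar>col_sum (row_normalize A) i - 1\<bar> \<le> g * col_sum (row_normalize A) i"
proof -
  have "row_sum A i * col_sum (row_normalize A) i - row_sum A i
          = row_sum A i * (col_sum (row_normalize A) i - 1)"
    by (simp add: right_diff_distrib)
  then have "row_sum A i * \<bar>col_sum (row_normalize A) i - 1\<bar>
          = \<bar>row_sum A i * col_sum (row_normalize A) i - row_sum A i\<bar>"
    using row_sum_pos[of i] by (simp add: abs_mult)
  also have "\<dots> \<le> row_sum A i * (g * col_sum (row_normalize A) i)"
    using abs_row_sum_mult_col_sum_row_normalize_diff_le[of i i] by (simp add: mult_ac)
  finally show ?thesis
    using row_sum_pos[of i] by simp
qed

lemma abs_row_normalize_minus_transpose_le_row:
  "\<bar>(row_normalize A - row_normalize (transpose (row_normalize A))) $ i $ j\<bar>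
     \<le> g * (A $ i $ j / row_sum A i)"
proof -
  define w where "w = A $ i $ j / (row_sum A i * row_sum A j * col_sum (row_normalize A) i)"
  have "0 \<le> w"
    using nonneg row_sum_pos col_sum_row_normalize_pos by (simp add: w_def less_imp_le)
  then have "w * \<bar>row_sum A j * col_sum (row_normalize A) i - row_sum A i\<bar>
               \<le> w * (g * (row_sum A j * col_sum (row_normalize A) i))"
    using abs_row_sum_mult_col_sum_row_normalize_diff_le by (rule mult_left_mono[rotated])
  also have "\<dots> = g * (A $ i $ j / row_sum A i)"
    using row_sum_pos[of j] col_sum_row_normalize_pos[of i] by (simp add: w_def)
  finally show ?thesis
    using \<open>0 \<le> w\<close> unfolding row_normalize_minus_transpose_nth w_def[symmetric]
    by (simp add: abs_mult)
qed

lemma abs_row_normalize_minus_transpose_le_col: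
  "\<bar>(row_normalize A - row_normalize (transpose (row_normalize A))) $ i $ j\<bar>
     \<le> 2 * g * (A $ i $ j / row_sum A j)"
proof -
  define c where "c = A $ i $ j / row_sum A j"
  define p where "p = (row_sum A j - row_sum A i) / row_sum A i"
  define q where "q = (col_sum (row_normalize A) i - 1) / col_sum (row_normalize A) i"
  have "(row_normalize A - row_normalize (transpose (row_normalize A))) $ i $ j = c * (p + q)"
    using row_sum_pos[of i] row_sum_pos[of j] col_sum_row_normalize_pos[of i]
    unfolding row_normalize_minus_transpose_nth c_def p_def q_def by (simp add: field_simps)
  moreover have "\<bar>p\<bar> \<le> g"
    using abs_row_sum_diff_le[of j i] row_sum_pos[of i] by (simp add: p_def abs_divide divide_le_eq)
  moreover have "\<bar>q\<bar> \<le> g"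
    using abs_col_sum_row_normalize_diff_le[of i] col_sum_row_normalize_pos[of i]
    by (simp add: q_def abs_divide divide_le_eq)
  moreover have "0 \<le> c"
    using nonneg row_sum_pos by (simp add: c_def less_imp_le)
  ultimately show ?thesis
    using abs_triangle_ineq[of p q] mult_left_mono[of "\<bar>p + q\<bar>" "2 * g" c]
    by (simp only: abs_mult abs_of_nonneg flip: c_def) (simp add: mult_ac)
qed

lemma onorm_row_normalize_minus_transpose_le:
  "onorm ((*v) (row_normalize A - row_normalize (transpose (row_normalize A)))) \<le> sqrt 2 * g"
proof -
  let ?M = "row_normalize A - row_normalize (transpose (row_normalize A))"
  have "(\<Sum>j\<in>UNIV. \<bar>?M $ i $ j\<bar>) \<le> g" for i
  proof -
    have "(\<Sum>j\<in>UNIV. \<bar>?M $ i $ j\<bar>) \<le> (\<Sum>j\<in>UNIV. g * (A $ i $ j / row_sum A i))"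
      by (intro sum_mono abs_row_normalize_minus_transpose_le_row)
    also have "\<dots> = g"
      using row_sum_pos[of i] by (simp add: row_sum_def sum_divide_distrib[symmetric] flip: sum_distrib_left)
    finally show ?thesis .
  qed
  moreover have "(\<Sum>i\<in>UNIV. \<bar>?M $ i $ j\<bar>) \<le> 2 * g" for j
  proof -
    have "(\<Sum>i\<in>UNIV. \<bar>?M $ i $ j\<bar>) \<le> (\<Sum>i\<in>UNIV. 2 * g * (A $ i $ j / row_sum A j))"
      by (intro sum_mono abs_row_normalize_minus_transpose_le_col)
    also have "\<dots> = 2 * g"
      using row_sum_pos[of j]
      by (simp add: row_sum_def symmetric[of _ j] sum_divide_distrib[symmetric] flip: sum_distrib_left)
    finally show ?thesis .
  qed
  ultimately have "onorm ((*v) ?M) \<le> sqrt (g * (2 * g))"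
    by (rule onorm_matrix_le_schur)
  also have "\<dots> = sqrt 2 * g"
    using row_sum_ratio_bound_nonneg by (simp add: real_sqrt_mult flip: power2_eq_square)
  finally show ?thesis .
qed

end

end

lemma gkernel_pos: "0 < gkernel eps a b"
  by (simp add: gkernel_def)

lemma gkernel_commute: "gkernel eps a b = gkernel eps b a"
  by (simp add: gkernel_def norm_minus_commute)

lemma col_sum_Kbar: "col_sum (Kbar eps x) = row_sum (Kbar eps x)"
  by (simp add: fun_eq_iff col_sum_def row_sum_def Kbar_def gkernel_commute)

lemma row_sum_Kbar_pos: "0 < row_sum (Kbar eps x) i"
  by (simp add: row_sum_def Kbar_def gkernel_pos sum_pos)

lemma Abar_nth:
  "Abar eps x $ i $ j = gkernel eps (x i) (x j) / (row_sum (Kbar eps x) i * row_sum (Kbar eps x) j)"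
  by (simp add: Abar_def col_sum_Kbar)

lemma Abar_pos: "0 < Abar eps x $ i $ j"
  by (simp add: Abar_nth gkernel_pos row_sum_Kbar_pos)

lemma Abar_symmetric: "Abar eps x $ i $ j = Abar eps x $ j $ i"
  by (simp add: Abar_nth gkernel_commute mult.commute)

lemma row_sum_Abar_pos: "0 < row_sum (Abar eps x) i"
  by (simp add: row_sum_def Abar_pos sum_pos)

lemma row_sum_Abar_ratio_le: "row_sum (Abar eps x) k / row_sum (Abar eps x) l \<le> 1 + gamma_n eps x"
proof -
  have "{row_sum (Abar eps x) i / row_sum (Abar eps x) j | i j. True}
          = (\<lambda>(i, j). row_sum (Abar eps x) i / row_sum (Abar eps x) j) ` UNIV"
    by auto
  then have "finite {row_sum (Abar eps x) i / row_sum (Abar eps x) j | i j. True}"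
    by simp
  then have "row_sum (Abar eps x) k / row_sum (Abar eps x) l
               \<le> Max {row_sum (Abar eps x) i / row_sum (Abar eps x) j | i j. True}"
    by (rule Max_ge) blast
  then show ?thesis
    by (simp add: gamma_n_def)
qed

theorem lemma4:
  fixes x :: "'n::finite \<Rightarrow> real^'p" and eps :: real
  assumes "eps > 0"
  shows "spectral_norm (Zbar eps x - matrix_inv (Lambdabar eps x) ** transpose (Zbar eps x))
           \<le> sqrt 2 * gamma_n eps x"
proof -
  have Abar_nonneg: "\<And>i j. 0 \<le> Abar eps x $ i $ j"
    using Abar_pos less_imp_le by blast
  note Abar_facts = Abar_nonneg Abar_symmetric row_sum_Abar_pos
  have Zbar_eq: "Zbar eps x = row_normalize (Abar eps x)"
    by (simp add: Zbar_def row_normalize_def)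
  have "Lambdabar eps x = diag_mat (col_sum (row_normalize (Abar eps x)))"
    unfolding Lambdabar_def diag_mat_def Zbar_eq ..
  then have "matrix_inv (Lambdabar eps x) ** transpose (Zbar eps x)
               = row_normalize (transpose (row_normalize (Abar eps x)))"
    using col_sum_row_normalize_pos[OF Abar_facts]
    by (simp add: Zbar_eq matrix_inv_col_sum_mult_transpose less_imp_neq[symmetric])
  then show ?thesis
    unfolding spectral_norm_def Zbar_eq
    using onorm_row_normalize_minus_transpose_le[OF Abar_facts row_sum_Abar_ratio_le]
    by simp
qed

end
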